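(* Assume $N\ge2$, $A\subset\Lambda$ is measurable with $|A|>0$, $\gamma:A\to(0,\infty)$ is measurable, and $P(x_1,\dots,x_N)\ge\rho^{(N-1)}(x_1,\dots,x_{N-1})\gamma(x_N)$ for a.e. $(x_1,\dots,x_N)\in\Lambda^{N-1}\times A$. Let $\varepsilon>0$ be such that $A_\varepsilon:=\{x\in A:\gamma(x)>\varepsilon\}$ has positive measure. Then $|A_\varepsilon|<\infty$; set $\alpha:=(\varepsilon|A_\varepsilon|)^{-1}$. Let $1\le r<\infty$ and $U\in L^r(\Lambda^N;P\,d^Nx)$. Then for every $1\le m\le N-1$ the set $$T_{N-m}:=\Big\{(x_{m+1},\dots,x_N)\in A_\varepsilon^{N-m}:\ U(\cdot,x_{m+1},\dots,x_N)\text{ is } d^mx\text{-measurable and }\int_{\Lambda^m}|U(\cdot,x_{m+1},\dots,x_N)|^r\rho^{(m)}\,d^mx\le\alpha^{N-m}\|U\|^r_{r,P\,d^Nx}\Big\}$$ does not have measure zero (in particular it is non-empty).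
   Context: $(\Lambda;dx)$ is a complete $\sigma$-finite measure space with non-zero measure $dx$; $d^kx$ denotes the completion of $dx^{\otimes k}$ on $\Lambda^k$, $|E|$ the measure of $E$, and "a.e." refers to these measures. $P$ is a symmetric probability density on $\Lambda^N$: nonnegative, measurable, symmetric, $\int_{\Lambda^N}P\,d^Nx=1$. For $1\le m<N$, $\rho^{(m)}(x_1,\dots,x_m):=\int_{\Lambda^{N-m}}P(x_1,\dots,x_N)\,dx_{m+1}\cdots dx_N$. $\|U\|_{r,P\,d^Nx}=(\int_{\Lambda^N}|U|^rP\,d^Nx)^{1/r}$. *)

theory Defs
  imports "HOL-Probability.Probability" "HOL-Combinatorics.Permutations"
begin

text \<open>Points of \<Lambda>^k are represented as extensional functions on the index set {..<k}
  (index i corresponds to the variable x_(i+1)).  d^k x is the completion of the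
  k-fold product measure.\<close>
definition dk :: "'a measure \<Rightarrow> nat \<Rightarrow> (nat \<Rightarrow> 'a) measure" where
  "dk M k = completion (PiM {..<k} (\<lambda>_. M))"

definition join :: "nat \<Rightarrow> nat \<Rightarrow> (nat \<Rightarrow> 'a) \<Rightarrow> (nat \<Rightarrow> 'a) \<Rightarrow> (nat \<Rightarrow> 'a)" where
  "join m N x y = (\<lambda>i. if i < m then x i else if i < N then y (i - m) else undefined)"

definition rho :: "'a measure \<Rightarrow> nat \<Rightarrow> ((nat \<Rightarrow> 'a) \<Rightarrow> real) \<Rightarrow> nat \<Rightarrow> (nat \<Rightarrow> 'a) \<Rightarrow> ennreal" where
  "rho M N P m x = (\<integral>\<^sup>+ y. ennreal (P (join m N x y)) \<partial>dk M (N - m))"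

end

theory Submission
  imports Defs
begin

(*
  Work with a Borel representative of P on the uncompleted product measure, where Tonelli's
  theorem is available, and write rho_j for its marginals. Using the symmetry of P to move the
  variable x_(j+1) into the last slot and integrating the hypothesis P >= rho_(N-1) gamma(x_N)
  over the variables after x_(j+1) gives rho_(j+1) >= gamma(x_(j+1)) rho_j; iterating,
  P >= eps^(N-m) rho_m on Lambda^m x A_eps^(N-m). For m = N - 1, integrating this against the
  indicator of x_N in A_eps gives eps |A_eps| <= 1. In general, integrating |U|^r rho_m over
  Lambda^m x A_eps^(N-m) shows that the mean over A_eps^(N-m) of the slice integrals is at most
  alpha^(N-m) ||U||^r, so they cannot all exceed this bound on a set of full measure.
*)

lemma borel_measurable_completion_AE:
  fixes f g :: "'a \<Rightarrow> 'b::topological_space"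
  assumes f: "f \<in> borel_measurable M" and "AE x in M. g x = f x"
  shows "g \<in> borel_measurable (completion M)"
proof (rule borel_measurableI)
  from assms(2) obtain S where S: "{x \<in> space M. g x \<noteq> f x} \<subseteq> S" "S \<in> null_sets M"
    by (auto elim!: AE_E)
  fix V :: "'b set" assume "open V"
  have "g -` V \<inter> space M = ((f -` V \<inter> space M) - S) \<union> (g -` V \<inter> space M \<inter> S)"
    using S(1) by auto
  moreover have "(f -` V \<inter> space M) - S \<in> sets (completion M)"
    using measurable_sets[OF f borel_open[OF \<open>open V\<close>]] S(2) by auto
  moreover have "g -` V \<inter> space M \<inter> S \<in> sets (completion M)"
    by (rule sets_completionI_sub[OF S(2)]) auto
  ultimately show "g -` V \<inter> space (completion M) \<in> sets (completion M)"
    by (metis sets.Un space_completion)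
qed

lemma superlevel_set_restrict_space:
  fixes \<gamma> :: "'a \<Rightarrow> 'b::linorder_topology"
  assumes "A \<in> sets M" and "\<gamma> \<in> borel_measurable (restrict_space M A)"
  shows "{x \<in> A. c < \<gamma> x} \<in> sets M"
proof -
  have "{x \<in> space (restrict_space M A). c < \<gamma> x} \<in> sets (restrict_space M A)"
    using assms(2) by measurable
  with assms(1) show ?thesis by (simp add: sets_restrict_space_iff)
qed

lemma restrict_join: "x \<in> extensional {..<m} \<Longrightarrow> restrict (join m n x y) {..<m} = x"
  by (auto simp: join_def fun_eq_iff extensional_def)

lemma join_assoc:
  assumes "j \<le> k" "k \<le> n"
  shows "join j n x (join (k - j) (n - j) u t) = join k n (join j k x u) t"
  using assms by (auto simp: join_def fun_eq_iff)

(* z \<circ> move_to_last N j is z with the coordinate j moved to the last position. *)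
definition move_to_last :: "nat \<Rightarrow> nat \<Rightarrow> nat \<Rightarrow> nat" where
  "move_to_last N j i = (if i < j then i else if i < N - 1 then i + 1 else if i = N - 1 then j else i)"

lemma move_to_last_last: "j < N \<Longrightarrow> move_to_last N j (N - 1) = j"
  by (auto simp: move_to_last_def)

lemma move_to_last_permutes: "j < N \<Longrightarrow> move_to_last N j permutes {..<N}"
proof (rule bij_imp_permutes)
  assume "j < N"
  have inj: "inj_on (move_to_last N j) {..<N}"
    unfolding inj_on_def move_to_last_def by (auto split: if_splits)
  moreover have "move_to_last N j ` {..<N} \<subseteq> {..<N}"
    using \<open>j < N\<close> by (auto simp: move_to_last_def)
  ultimately show "bij_betw (move_to_last N j) {..<N} {..<N}"
    unfolding bij_betw_def using endo_inj_surj by blast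
  show "move_to_last N j i = i" if "i \<notin> {..<N}" for i
    using that \<open>j < N\<close> by (auto simp: move_to_last_def)
qed

lemma restrict_move_to_last_join:
  "j < N \<Longrightarrow> restrict (join (Suc j) N w u \<circ> move_to_last N j) {..<N - 1} = join j (N - 1) (restrict w {..<j}) u"
  by (auto simp: join_def move_to_last_def fun_eq_iff)

lemma ennreal_le_inverse_power_mult:
  fixes a b :: ennreal
  assumes "0 < e" and "ennreal (e ^ n) * a \<le> b"
  shows "a \<le> ennreal ((1 / e) ^ n) * b"
proof -
  have "ennreal ((1 / e) ^ n) * ennreal (e ^ n) = 1"
    using assms(1) by (simp add: ennreal_mult[symmetric] power_mult_distrib[symmetric])
  then have "a = ennreal ((1 / e) ^ n) * (ennreal (e ^ n) * a)"
    by (simp add: mult.assoc[symmetric])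
  also have "\<dots> \<le> ennreal ((1 / e) ^ n) * b"
    using assms(2) by (rule mult_left_mono) simp
  finally show ?thesis .
qed

locale cartesian_power = sigma_finite_measure M for M :: "'a measure"
begin

sublocale product: product_sigma_finite "\<lambda>_::nat. M"
  unfolding product_sigma_finite_def using sigma_finite_measure_axioms by simp

abbreviation powerM :: "nat \<Rightarrow> (nat \<Rightarrow> 'a) measure" where
  "powerM k \<equiv> PiM {..<k} (\<lambda>_. M)"

lemma sigma_finite_powerM: "sigma_finite_measure (powerM k)"
  by (rule product.sigma_finite) auto

lemma pair_sigma_finite_powerM: "pair_sigma_finite (powerM k) (powerM l)"
  by (simp add: pair_sigma_finite_def sigma_finite_powerM)

lemma join_eq_restrict: "m \<le> n \<Longrightarrow> join m n x y = (\<lambda>i\<in>{..<n}. if i < m then x i else y (i - m))"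
  by (auto simp: join_def fun_eq_iff)

lemma measurable_join:
  assumes "m \<le> n"
  shows "(\<lambda>p. join m n (fst p) (snd p)) \<in> powerM m \<Otimes>\<^sub>M powerM (n - m) \<rightarrow>\<^sub>M powerM n"
  unfolding join_eq_restrict[OF assms]
proof (rule measurable_restrict)
  fix i assume "i \<in> {..<n}"
  with assms show "(\<lambda>p. if i < m then fst p i else snd p (i - m)) \<in> powerM m \<Otimes>\<^sub>M powerM (n - m) \<rightarrow>\<^sub>M M"
    by (cases "i < m") (simp_all add: measurable_compose[OF measurable_fst measurable_component_singleton]
        measurable_compose[OF measurable_snd measurable_component_singleton])
qed

lemma join_in_space:
  assumes "m \<le> n" "x \<in> space (powerM m)" "y \<in> space (powerM (n - m))"
  shows "join m n x y \<in> space (powerM n)"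
  using measurable_space[OF measurable_join[OF assms(1)], of "(x, y)"] assms
  by (simp add: space_pair_measure)

lemma measurable_join_left:
  assumes "m \<le> n" "y \<in> space (powerM (n - m))"
  shows "(\<lambda>x. join m n x y) \<in> powerM m \<rightarrow>\<^sub>M powerM n"
proof -
  have "(\<lambda>x. (x, y)) \<in> powerM m \<rightarrow>\<^sub>M powerM m \<Otimes>\<^sub>M powerM (n - m)"
    using assms(2) by measurable
  from measurable_comp[OF this measurable_join[OF assms(1)]] show ?thesis by (simp add: comp_def)
qed

lemma measurable_join_right:
  assumes "m \<le> n" "x \<in> space (powerM m)"
  shows "(\<lambda>y. join m n x y) \<in> powerM (n - m) \<rightarrow>\<^sub>M powerM n"
  using measurable_compose_Pair1[OF assms(2) measurable_join[OF assms(1)]] by simp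

lemma join_vimage_PiE:
  assumes "m \<le> n" and A: "\<And>i. i < n \<Longrightarrow> A i \<subseteq> space M"
  shows "(\<lambda>p. join m n (fst p) (snd p)) -` PiE {..<n} A \<inter> space (powerM m \<Otimes>\<^sub>M powerM (n - m))
    = PiE {..<m} A \<times> PiE {..<n - m} (\<lambda>i. A (i + m))"
proof (intro set_eqI iffI)
  fix p assume p: "p \<in> PiE {..<m} A \<times> PiE {..<n - m} (\<lambda>i. A (i + m))"
  have "PiE {..<m} A \<subseteq> space (powerM m)" "PiE {..<n - m} (\<lambda>i. A (i + m)) \<subseteq> space (powerM (n - m))"
    using assms(1) by (auto simp: space_PiM intro!: PiE_mono A)
  with p have "p \<in> space (powerM m \<Otimes>\<^sub>M powerM (n - m))"
    by (auto simp: space_pair_measure)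
  moreover have "join m n (fst p) (snd p) i \<in> A i" if "i < n" for i
  proof (cases "i < m")
    case False
    then have "i - m \<in> {..<n - m}" using that by auto
    then have "snd p (i - m) \<in> A (i - m + m)"
      using p by (auto simp: PiE_iff)
    with False that show ?thesis by (simp add: join_def)
  qed (use p in \<open>auto simp: join_def\<close>)
  ultimately show "p \<in> (\<lambda>p. join m n (fst p) (snd p)) -` PiE {..<n} A \<inter> space (powerM m \<Otimes>\<^sub>M powerM (n - m))"
    using assms(1) by (auto simp: join_eq_restrict)
next
  fix p assume p: "p \<in> (\<lambda>p. join m n (fst p) (snd p)) -` PiE {..<n} A \<inter> space (powerM m \<Otimes>\<^sub>M powerM (n - m))"
  then have join: "join m n (fst p) (snd p) i \<in> A i" if "i < n" for i
    using that by auto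
  have "fst p i \<in> A i" if "i < m" for i
    using join[of i] that assms(1) by (simp add: join_def)
  moreover have "snd p j \<in> A (j + m)" if "j < n - m" for j
    using join[of "j + m"] that by (simp add: join_def)
  ultimately show "p \<in> PiE {..<m} A \<times> PiE {..<n - m} (\<lambda>i. A (i + m))"
    using p by (auto simp: mem_Times_iff space_pair_measure space_PiM PiE_def)
qed

lemma distr_join:
  assumes "m \<le> n"
  shows "distr (powerM m \<Otimes>\<^sub>M powerM (n - m)) (powerM n) (\<lambda>p. join m n (fst p) (snd p)) = powerM n"
proof (rule product.PiM_eqI)
  interpret right: sigma_finite_measure "powerM (n - m)" by (rule sigma_finite_powerM)
  fix A assume A: "\<And>i. i \<in> {..<n} \<Longrightarrow> A i \<in> sets M"
  have "emeasure (distr (powerM m \<Otimes>\<^sub>M powerM (n - m)) (powerM n) (\<lambda>p. join m n (fst p) (snd p))) (PiE {..<n} A)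
      = emeasure (powerM m \<Otimes>\<^sub>M powerM (n - m)) (PiE {..<m} A \<times> PiE {..<n - m} (\<lambda>i. A (i + m)))"
    using A assms by (subst emeasure_distr)
      (auto simp: join_vimage_PiE sets.sets_into_space intro!: measurable_join)
  also have "\<dots> = (\<Prod>i<m. emeasure M (A i)) * (\<Prod>i<n - m. emeasure M (A (i + m)))"
    using A assms by (subst right.emeasure_pair_measure_Times) (auto intro!: arg_cong2[where f="(*)"] product.emeasure_PiM)
  also have "(\<Prod>i<n - m. emeasure M (A (i + m))) = (\<Prod>i\<in>{m..<n}. emeasure M (A i))"
    using assms prod.shift_bounds_nat_ivl[of "\<lambda>i. emeasure M (A i)" 0 m "n - m"]
    by (simp add: atLeast0LessThan add.commute)
  also have "(\<Prod>i<m. emeasure M (A i)) * \<dots> = (\<Prod>i<n. emeasure M (A i))"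
    using assms by (metis prod.atLeastLessThan_concat atLeast0LessThan zero_le)
  finally show "emeasure (distr (powerM m \<Otimes>\<^sub>M powerM (n - m)) (powerM n) (\<lambda>p. join m n (fst p) (snd p))) (PiE {..<n} A)
      = (\<Prod>i\<in>{..<n}. emeasure M (A i))" by simp
qed simp_all

lemma nn_integral_join_fst:
  assumes "m \<le> n" and f: "f \<in> borel_measurable (powerM n)"
  shows "(\<integral>\<^sup>+ z. f z \<partial>powerM n) = (\<integral>\<^sup>+ x. \<integral>\<^sup>+ y. f (join m n x y) \<partial>powerM (n - m) \<partial>powerM m)"
proof -
  interpret pair_sigma_finite "powerM m" "powerM (n - m)" by (rule pair_sigma_finite_powerM)
  have "(\<integral>\<^sup>+ z. f z \<partial>powerM n) = (\<integral>\<^sup>+ p. f (join m n (fst p) (snd p)) \<partial>(powerM m \<Otimes>\<^sub>M powerM (n - m)))"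
    by (subst distr_join[OF assms(1), symmetric]) (simp add: nn_integral_distr measurable_join assms)
  also have "\<dots> = (\<integral>\<^sup>+ x. \<integral>\<^sup>+ y. f (join m n x y) \<partial>powerM (n - m) \<partial>powerM m)"
    using M2.nn_integral_fst[OF measurable_comp[OF measurable_join[OF assms(1)] f]] by (simp add: comp_def)
  finally show ?thesis .
qed

lemma nn_integral_join_snd:
  assumes "m \<le> n" and f: "f \<in> borel_measurable (powerM n)"
  shows "(\<integral>\<^sup>+ z. f z \<partial>powerM n) = (\<integral>\<^sup>+ y. \<integral>\<^sup>+ x. f (join m n x y) \<partial>powerM m \<partial>powerM (n - m))"
proof -
  interpret pair_sigma_finite "powerM m" "powerM (n - m)" by (rule pair_sigma_finite_powerM)
  have "(\<integral>\<^sup>+ z. f z \<partial>powerM n) = (\<integral>\<^sup>+ p. f (join m n (fst p) (snd p)) \<partial>(powerM m \<Otimes>\<^sub>M powerM (n - m)))"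
    by (subst distr_join[OF assms(1), symmetric]) (simp add: nn_integral_distr measurable_join assms)
  also have "\<dots> = (\<integral>\<^sup>+ y. \<integral>\<^sup>+ x. f (join m n x y) \<partial>powerM m \<partial>powerM (n - m))"
    using nn_integral_snd[OF measurable_comp[OF measurable_join[OF assms(1)] f]] by (simp add: comp_def)
  finally show ?thesis .
qed

lemma borel_measurable_nn_integral_join_fst:
  assumes "m \<le> n" and f: "f \<in> borel_measurable (powerM n)" and g: "g \<in> borel_measurable (powerM m)"
  shows "(\<lambda>y. \<integral>\<^sup>+ x. f (join m n x y) * g x \<partial>powerM m) \<in> borel_measurable (powerM (n - m))"
proof -
  interpret left: sigma_finite_measure "powerM m" by (rule sigma_finite_powerM)
  have "(\<lambda>p. f (join m n (snd p) (fst p))) \<in> borel_measurable (powerM (n - m) \<Otimes>\<^sub>M powerM m)"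
    using measurable_comp[OF measurable_comp[OF measurable_pair_swap' measurable_join[OF assms(1)]] f]
    by (simp add: comp_def case_prod_beta)
  moreover have "(\<lambda>p. g (snd p)) \<in> borel_measurable (powerM (n - m) \<Otimes>\<^sub>M powerM m)"
    using g by measurable
  ultimately have "(\<lambda>p. f (join m n (snd p) (fst p)) * g (snd p)) \<in> borel_measurable (powerM (n - m) \<Otimes>\<^sub>M powerM m)"
    by measurable
  from left.borel_measurable_nn_integral_fst[OF this] show ?thesis by simp
qed

lemma borel_measurable_nn_integral_join_snd:
  assumes "m \<le> n" and f: "f \<in> borel_measurable (powerM n)"
  shows "(\<lambda>x. \<integral>\<^sup>+ y. f (join m n x y) \<partial>powerM (n - m)) \<in> borel_measurable (powerM m)"
proof -
  interpret right: sigma_finite_measure "powerM (n - m)" by (rule sigma_finite_powerM)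
  show ?thesis
    using right.borel_measurable_nn_integral_fst[OF measurable_comp[OF measurable_join[OF assms(1)] f]]
    by (simp add: comp_def)
qed

lemma AE_join_pair:
  assumes "m \<le> n" and "AE z in powerM n. Q z"
  shows "AE p in powerM m \<Otimes>\<^sub>M powerM (n - m). Q (join m n (fst p) (snd p))"
proof -
  have "AE z in distr (powerM m \<Otimes>\<^sub>M powerM (n - m)) (powerM n) (\<lambda>p. join m n (fst p) (snd p)). Q z"
    unfolding distr_join[OF assms(1)] by (rule assms(2))
  from AE_distrD[OF measurable_join[OF assms(1)] this] show ?thesis .
qed

lemma AE_join_fst:
  assumes "m \<le> n" and "AE z in powerM n. Q z"
  shows "AE x in powerM m. AE y in powerM (n - m). Q (join m n x y)"
proof -
  interpret pair_sigma_finite "powerM m" "powerM (n - m)" by (rule pair_sigma_finite_powerM)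
  from AE_pair[OF AE_join_pair[OF assms]] show ?thesis by simp
qed

lemma AE_join_snd:
  assumes "m \<le> n" and "AE z in powerM n. Q z"
  shows "AE y in powerM (n - m). AE x in powerM m. Q (join m n x y)"
proof -
  interpret pair_sigma_finite "powerM m" "powerM (n - m)" by (rule pair_sigma_finite_powerM)
  interpret swapped: pair_sigma_finite "powerM (n - m)" "powerM m" by (rule pair_sigma_finite_powerM)
  have "AE p in distr (powerM (n - m) \<Otimes>\<^sub>M powerM m) (powerM m \<Otimes>\<^sub>M powerM (n - m)) (\<lambda>(y, x). (x, y)).
      Q (join m n (fst p) (snd p))"
    using AE_join_pair[OF assms] by (simp only: distr_pair_swap[symmetric])
  from AE_distrD[OF measurable_pair_swap' this]
  have "AE q in powerM (n - m) \<Otimes>\<^sub>M powerM m. Q (join m n (snd q) (fst q))"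
    by (simp add: case_prod_beta)
  from swapped.AE_pair[OF this] show ?thesis by simp
qed

lemma AE_restrict:
  assumes "m \<le> n" and "AE x in powerM m. Q x"
  shows "AE z in powerM n. Q (restrict z {..<m})"
proof -
  interpret right: sigma_finite_measure "powerM (n - m)" by (rule sigma_finite_powerM)
  from assms(2) obtain S where S: "{x \<in> space (powerM m). \<not> Q x} \<subseteq> S" "S \<in> null_sets (powerM m)"
    by (auto elim!: AE_E)
  have restrict: "(\<lambda>z. restrict z {..<m}) \<in> powerM n \<rightarrow>\<^sub>M powerM m"
    using assms(1) by (intro measurable_restrict_subset) auto
  let ?B = "(\<lambda>z. restrict z {..<m}) -` S \<inter> space (powerM n)"
  have B: "?B \<in> sets (powerM n)" using measurable_sets[OF restrict] S(2) by auto
  have "(\<lambda>p. join m n (fst p) (snd p)) -` ?B \<inter> space (powerM m \<Otimes>\<^sub>M powerM (n - m))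
      = (S \<inter> space (powerM m)) \<times> space (powerM (n - m))"
    using join_in_space[OF assms(1)] by (auto simp: space_pair_measure restrict_join space_PiM PiE_def)
  then have "emeasure (powerM n) ?B = emeasure (powerM m \<Otimes>\<^sub>M powerM (n - m)) ((S \<inter> space (powerM m)) \<times> space (powerM (n - m)))"
    using B by (subst (1) distr_join[OF assms(1), symmetric]) (simp add: emeasure_distr measurable_join assms(1))
  also have "\<dots> = 0"
    using S(2) by (subst right.emeasure_pair_measure_Times) (auto simp: Int_absorb2 sets.sets_into_space)
  finally have "?B \<in> null_sets (powerM n)" using B by auto
  moreover have "{z \<in> space (powerM n). \<not> Q (restrict z {..<m})} \<subseteq> ?B"
    using S(1) measurable_space[OF restrict] by auto
  ultimately show ?thesis by (auto intro: AE_I')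
qed

lemma measurable_permute:
  assumes "\<sigma> permutes {..<n}"
  shows "(\<lambda>z. z \<circ> \<sigma>) \<in> powerM n \<rightarrow>\<^sub>M powerM n"
proof -
  have "(\<lambda>i. z (\<sigma> i)) \<in> PiE {..<n} (\<lambda>_. space M)" if "z \<in> space (powerM n)" for z
    using that permutes_in_image[OF assms] permutes_not_in[OF assms]
    by (auto simp: space_PiM PiE_iff extensional_def)
  moreover have "(\<lambda>z. z (\<sigma> i)) \<in> powerM n \<rightarrow>\<^sub>M M" if "i < n" for i
    using that permutes_in_image[OF assms] by (intro measurable_component_singleton) auto
  ultimately have "(\<lambda>z i. z (\<sigma> i)) \<in> powerM n \<rightarrow>\<^sub>M powerM n"
    by (intro measurable_PiM_single') auto
  then show ?thesis by (simp add: comp_def)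
qed

lemma distr_permute:
  assumes \<sigma>: "\<sigma> permutes {..<n}"
  shows "distr (powerM n) (powerM n) (\<lambda>z. z \<circ> \<sigma>) = powerM n"
proof (rule product.PiM_eqI)
  fix A assume A: "\<And>i. i \<in> {..<n} \<Longrightarrow> A i \<in> sets M"
  have inv: "inv \<sigma> i < n" if "i < n" for i
    using that permutes_in_image[OF permutes_inv[OF \<sigma>]] by simp
  have "(\<lambda>z. z \<circ> \<sigma>) -` PiE {..<n} A \<inter> space (powerM n) = PiE {..<n} (\<lambda>i. A (inv \<sigma> i))"
  proof (intro set_eqI iffI)
    fix z assume z: "z \<in> PiE {..<n} (\<lambda>i. A (inv \<sigma> i))"
    have "PiE {..<n} (\<lambda>i. A (inv \<sigma> i)) \<subseteq> space (powerM n)"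
      using inv by (auto simp: space_PiM intro!: PiE_mono sets.sets_into_space A)
    with z have "z \<in> space (powerM n)" by auto
    moreover have "z (\<sigma> i) \<in> A i" if "i < n" for i
      using PiE_mem[OF z, of "\<sigma> i"] that permutes_in_image[OF \<sigma>] permutes_inverses(2)[OF \<sigma>] by simp
    moreover have "z \<circ> \<sigma> \<in> extensional {..<n}"
      using z permutes_not_in[OF \<sigma>] by (auto simp: PiE_iff extensional_def)
    ultimately show "z \<in> (\<lambda>z. z \<circ> \<sigma>) -` PiE {..<n} A \<inter> space (powerM n)"
      by (auto simp: PiE_iff)
  next
    fix z assume z: "z \<in> (\<lambda>z. z \<circ> \<sigma>) -` PiE {..<n} A \<inter> space (powerM n)"
    have "z (\<sigma> (inv \<sigma> i)) \<in> A (inv \<sigma> i)" if "i < n" for i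
      using z inv[OF that] by (auto simp: PiE_iff)
    then have "z i \<in> A (inv \<sigma> i)" if "i < n" for i
      using that by (simp add: permutes_inverses(1)[OF \<sigma>])
    with z show "z \<in> PiE {..<n} (\<lambda>i. A (inv \<sigma> i))"
      by (auto simp: PiE_iff space_PiM)
  qed
  then have "emeasure (distr (powerM n) (powerM n) (\<lambda>z. z \<circ> \<sigma>)) (PiE {..<n} A) = (\<Prod>i<n. emeasure M (A (inv \<sigma> i)))"
    using A \<sigma> by (simp add: emeasure_distr measurable_permute) (auto intro!: product.emeasure_PiM A inv)
  also have "\<dots> = (\<Prod>i<n. emeasure M (A i))"
    using prod.permute[OF permutes_inv[OF \<sigma>], of "\<lambda>i. emeasure M (A i)"] by (simp add: comp_def)
  finally show "emeasure (distr (powerM n) (powerM n) (\<lambda>z. z \<circ> \<sigma>)) (PiE {..<n} A) = (\<Prod>i\<in>{..<n}. emeasure M (A i))" .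
qed simp_all

lemma AE_permute:
  assumes "\<sigma> permutes {..<n}" and "AE z in powerM n. Q z"
  shows "AE z in powerM n. Q (z \<circ> \<sigma>)"
proof -
  have "AE z in distr (powerM n) (powerM n) (\<lambda>z. z \<circ> \<sigma>). Q z"
    unfolding distr_permute[OF assms(1)] by (rule assms(2))
  from AE_distrD[OF measurable_permute[OF assms(1)] this] show ?thesis .
qed

lemma AE_slice_completion:
  fixes U U' :: "(nat \<Rightarrow> 'a) \<Rightarrow> real"
  assumes "m \<le> n" and U': "U' \<in> borel_measurable (powerM n)" and "AE z in powerM n. U z = U' z"
  shows "AE y in powerM (n - m). (\<lambda>x. U (join m n x y)) \<in> borel_measurable (completion (powerM m)) \<and>
    (AE x in powerM m. U (join m n x y) = U' (join m n x y))"
  using AE_join_snd[OF assms(1,3)] AE_space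
proof eventually_elim
  case (elim y)
  have "(\<lambda>x. U' (join m n x y)) \<in> borel_measurable (powerM m)"
    using measurable_comp[OF measurable_join_left[OF assms(1) elim(2)] U'] by (simp add: comp_def)
  with elim(1) show ?case by (simp add: borel_measurable_completion_AE)
qed

lemma AE_eq_permute_invariant:
  assumes "\<sigma> permutes {..<n}" and "\<forall>z\<in>space (powerM n). P (z \<circ> \<sigma>) = P z"
    and "AE z in powerM n. P z = P' z"
  shows "AE z in powerM n. P' (z \<circ> \<sigma>) = P' z"
  using AE_permute[OF assms(1,3)] assms(3) AE_space
  by eventually_elim (use assms(2) in simp)

end

locale density_marginals = cartesian_power M for M :: "'a measure" +
  fixes N :: nat and P :: "(nat \<Rightarrow> 'a) \<Rightarrow> real"
  assumes borel_measurable_density: "P \<in> borel_measurable (powerM N)"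
begin

lemma borel_measurable_ennreal_density: "(\<lambda>z. ennreal (P z)) \<in> borel_measurable (powerM N)"
  using measurable_compose[OF borel_measurable_density measurable_ennreal] .

definition marginal :: "nat \<Rightarrow> (nat \<Rightarrow> 'a) \<Rightarrow> ennreal" where
  "marginal j x = (\<integral>\<^sup>+ y. ennreal (P (join j N x y)) \<partial>powerM (N - j))"

lemma borel_measurable_marginal: "j \<le> N \<Longrightarrow> marginal j \<in> borel_measurable (powerM j)"
  unfolding marginal_def[abs_def]
  by (rule borel_measurable_nn_integral_join_snd) (use borel_measurable_density in simp_all)

lemma marginal_N: "z \<in> space (powerM N) \<Longrightarrow> marginal N z = ennreal (P z)"
proof -
  assume z: "z \<in> space (powerM N)"
  then have "join N N z y = z" for y
    by (auto simp: join_def fun_eq_iff space_PiM PiE_def extensional_def)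
  then show ?thesis unfolding marginal_def by (simp add: PiM_empty)
qed

lemma nn_integral_marginal:
  "j \<le> N \<Longrightarrow> (\<integral>\<^sup>+ x. marginal j x \<partial>powerM j) = (\<integral>\<^sup>+ z. ennreal (P z) \<partial>powerM N)"
  unfolding marginal_def using borel_measurable_density by (simp add: nn_integral_join_fst)

lemma marginal_marginal:
  assumes "j \<le> k" "k \<le> N" and x: "x \<in> space (powerM j)"
  shows "(\<integral>\<^sup>+ u. marginal k (join j k x u) \<partial>powerM (k - j)) = marginal j x"
proof -
  have "(\<lambda>y. ennreal (P (join j N x y))) \<in> borel_measurable (powerM (N - j))"
    using measurable_comp[OF measurable_join_right[OF _ x] borel_measurable_density] assms
    by (simp add: comp_def)
  from nn_integral_join_fst[OF _ this, of "k - j"] assms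
  show ?thesis
    unfolding marginal_def by (simp add: join_assoc diff_diff_left)
qed

lemma rho_eq_marginal:
  assumes "j \<le> N" and "AE z in powerM N. P' z = P z"
  shows "AE x in powerM j. rho M N P' j x = marginal j x"
  using AE_join_fst[OF assms]
proof eventually_elim
  case (elim x)
  then show ?case
    unfolding rho_def marginal_def dk_def nn_integral_completion
    by (intro nn_integral_cong_AE) (auto elim!: AE_mp)
qed

lemma marginal_lower_bound_of_AE_eq:
  assumes "AE z in powerM N. P' z = P z"
    and "AE z in powerM N. z (N - 1) \<in> A \<longrightarrow>
      rho M N P' (N - 1) (restrict z {..<N - 1}) * ennreal (\<gamma> (z (N - 1))) \<le> ennreal (P' z)"
  shows "AE z in powerM N. z (N - 1) \<in> A \<longrightarrow>
    marginal (N - 1) (restrict z {..<N - 1}) * ennreal (\<gamma> (z (N - 1))) \<le> ennreal (P z)"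
  using AE_restrict[OF diff_le_self rho_eq_marginal[OF diff_le_self[of N 1] assms(1)]] assms
  by eventually_elim auto

end

locale symmetric_lower_bound = density_marginals +
  fixes A :: "'a set" and \<gamma> :: "'a \<Rightarrow> real"
  assumes N_pos: "0 < N"
    and symmetric: "\<And>\<sigma>. \<sigma> permutes {..<N} \<Longrightarrow> AE z in powerM N. P (z \<circ> \<sigma>) = P z"
    and lower_bound: "AE z in powerM N. z (N - 1) \<in> A \<longrightarrow>
      marginal (N - 1) (restrict z {..<N - 1}) * ennreal (\<gamma> (z (N - 1))) \<le> ennreal (P z)"
begin

lemma lower_bound_at:
  assumes "j < N"
  shows "AE z in powerM N. z j \<in> A \<longrightarrow>
    marginal (N - 1) (restrict (z \<circ> move_to_last N j) {..<N - 1}) * ennreal (\<gamma> (z j)) \<le> ennreal (P z)"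
  using AE_permute[OF move_to_last_permutes[OF assms] lower_bound] symmetric[OF move_to_last_permutes[OF assms]]
  by eventually_elim (simp add: move_to_last_last[OF assms, simplified])

lemma marginal_step:
  assumes "j < N"
  shows "AE w in powerM (Suc j). w j \<in> A \<longrightarrow>
    ennreal (\<gamma> (w j)) * marginal j (restrict w {..<j}) \<le> marginal (Suc j) w"
  using AE_join_fst[OF Suc_leI[OF assms] lower_bound_at[OF assms]] AE_space
proof eventually_elim
  case (elim w)
  show ?case
  proof
    assume wj: "w j \<in> A"
    have "join (Suc j) N w u j = w j" for u using assms by (simp add: join_def)
    then have bound: "AE u in powerM (N - Suc j).
        marginal (N - 1) (join j (N - 1) (restrict w {..<j}) u) * ennreal (\<gamma> (w j)) \<le> ennreal (P (join (Suc j) N w u))"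
      using elim(1) wj by (simp add: restrict_move_to_last_join[OF assms, simplified])
    have w: "restrict w {..<j} \<in> space (powerM j)"
      using elim(2) by (auto simp: space_PiM PiE_def Pi_def)
    have "(\<lambda>u. marginal (N - 1) (join j (N - 1) (restrict w {..<j}) u)) \<in> borel_measurable (powerM (N - 1 - j))"
      using measurable_comp[OF measurable_join_right[OF _ w] borel_measurable_marginal[of "N - 1"]] assms
      by (simp add: comp_def)
    then have "ennreal (\<gamma> (w j)) * marginal j (restrict w {..<j})
        = (\<integral>\<^sup>+ u. ennreal (\<gamma> (w j)) * marginal (N - 1) (join j (N - 1) (restrict w {..<j}) u) \<partial>powerM (N - 1 - j))"
      using marginal_marginal[of j "N - 1", OF _ _ w] assms by (simp add: nn_integral_cmult)
    also have "\<dots> \<le> (\<integral>\<^sup>+ u. ennreal (P (join (Suc j) N w u)) \<partial>powerM (N - Suc j))"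
      using bound by (auto intro!: nn_integral_mono_AE elim!: AE_mp simp: mult.commute)
    finally show "ennreal (\<gamma> (w j)) * marginal j (restrict w {..<j}) \<le> marginal (Suc j) w"
      by (simp add: marginal_def)
  qed
qed

lemma marginal_le_density:
  assumes "0 \<le> \<epsilon>" "B \<subseteq> A" "\<And>x. x \<in> B \<Longrightarrow> \<epsilon> \<le> \<gamma> x" "j \<le> N"
  shows "AE z in powerM N. (\<forall>i\<in>{j..<N}. z i \<in> B) \<longrightarrow>
    ennreal (\<epsilon> ^ (N - j)) * marginal j (restrict z {..<j}) \<le> ennreal (P z)"
  using assms(4)
proof (induction j rule: inc_induct)
  case base
  show ?case
    by (intro AE_I2) (simp add: marginal_N space_PiM PiE_restrict)
next
  case (step j)
  have "{..<Suc j} \<inter> {..<j} = {..<j}" by auto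
  then have "AE z in powerM N. z j \<in> A \<longrightarrow>
      ennreal (\<gamma> (z j)) * marginal j (restrict z {..<j}) \<le> marginal (Suc j) (restrict z {..<Suc j})"
    using AE_restrict[OF _ marginal_step[OF step(2)], of N] step(2) by simp
  with step.IH show ?case
  proof eventually_elim
    case (elim z)
    show ?case
    proof
      assume B: "\<forall>i\<in>{j..<N}. z i \<in> B"
      then have zj: "z j \<in> B" using step(2) by simp
      have "ennreal (\<epsilon> ^ (N - j)) * marginal j (restrict z {..<j})
          = ennreal (\<epsilon> ^ (N - Suc j)) * (ennreal \<epsilon> * marginal j (restrict z {..<j}))"
        using step(2) assms(1) by (simp add: Suc_diff_Suc[symmetric] power_Suc2 ennreal_mult mult_ac)
      also have "\<dots> \<le> ennreal (\<epsilon> ^ (N - Suc j)) * (ennreal (\<gamma> (z j)) * marginal j (restrict z {..<j}))"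
        using assms(3)[OF zj] by (intro mult_left_mono mult_right_mono ennreal_leI) auto
      also have "\<dots> \<le> ennreal (\<epsilon> ^ (N - Suc j)) * marginal (Suc j) (restrict z {..<Suc j})"
        using elim(2) zj assms(2) by (intro mult_left_mono) auto
      also have "\<dots> \<le> ennreal (P z)" using elim(1) B by (simp add: restrict_def)
      finally show "ennreal (\<epsilon> ^ (N - j)) * marginal j (restrict z {..<j}) \<le> ennreal (P z)" .
    qed
  qed
qed

lemma emeasure_superlevel_le:
  assumes "0 \<le> \<epsilon>" "B \<in> sets M" "B \<subseteq> A" "\<And>x. x \<in> B \<Longrightarrow> \<epsilon> \<le> \<gamma> x"
    and normalized: "(\<integral>\<^sup>+ z. ennreal (P z) \<partial>powerM N) = 1"
  shows "ennreal \<epsilon> * emeasure M B \<le> 1"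
proof -
  obtain n where N: "N = Suc n" using N_pos gr0_implies_Suc by blast
  then have "n \<le> N" by simp
  define f where "f z = ennreal \<epsilon> * marginal n (restrict z {..<n}) * indicator B (z n)" for z
  have "(\<lambda>z. restrict z {..<n}) \<in> powerM N \<rightarrow>\<^sub>M powerM n"
    using N by (intro measurable_restrict_subset) auto
  from measurable_comp[OF this borel_measurable_marginal[of n]]
  have "(\<lambda>z. marginal n (restrict z {..<n})) \<in> borel_measurable (powerM N)"
    using N by (simp add: comp_def)
  moreover have "(\<lambda>z. z n) \<in> powerM N \<rightarrow>\<^sub>M M"
    using N by (intro measurable_component_singleton) auto
  from measurable_comp[OF this borel_measurable_indicator[OF assms(2)]]
  have "(\<lambda>z. indicator B (z n) :: ennreal) \<in> borel_measurable (powerM N)"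
    by (simp add: comp_def)
  ultimately have f: "f \<in> borel_measurable (powerM N)"
    unfolding f_def[abs_def] by measurable
  have le1: "(\<integral>\<^sup>+ z. f z \<partial>powerM N) \<le> 1"
    unfolding normalized[symmetric] using marginal_le_density[OF assms(1,3,4), of n]
    by (intro nn_integral_mono_AE) (auto elim!: AE_mp simp: f_def N split: split_indicator)
  have "(\<integral>\<^sup>+ t. f (join n N x t) \<partial>powerM (N - n)) = ennreal \<epsilon> * marginal n x * emeasure M B"
    if "x \<in> space (powerM n)" for x
  proof -
    have "restrict (join n N x t) {..<n} = x" for t
      using that by (simp add: restrict_join space_PiM PiE_def)
    moreover have "join n N x t n = t 0" for t
      by (simp add: join_def N)
    ultimately have "f (join n N x t) = ennreal \<epsilon> * marginal n x * indicator B (t 0)" for t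
      by (simp add: f_def)
    moreover have "(\<integral>\<^sup>+ t. indicator B (t 0) \<partial>powerM 1) = emeasure M B"
      using product.product_nn_integral_singleton[of "indicator B" 0] assms(2) by (simp add: lessThan_Suc)
    ultimately show ?thesis
      using assms(2) by (simp add: N nn_integral_cmult)
  qed
  then have "(\<integral>\<^sup>+ z. f z \<partial>powerM N) = (\<integral>\<^sup>+ x. ennreal \<epsilon> * marginal n x * emeasure M B \<partial>powerM n)"
    using nn_integral_join_fst[of n N, OF _ f] N by (auto intro!: nn_integral_cong)
  also have "\<dots> = ennreal \<epsilon> * emeasure M B"
    using borel_measurable_marginal[OF \<open>n \<le> N\<close>] nn_integral_marginal[OF \<open>n \<le> N\<close>] normalized
    by (simp add: nn_integral_cmult nn_integral_multc)
  finally show ?thesis using le1 by simp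
qed

lemma nn_integral_slices_le:
  assumes "m \<le> N" "0 < \<epsilon>" "B \<subseteq> A" "\<And>x. x \<in> B \<Longrightarrow> \<epsilon> \<le> \<gamma> x"
    and f: "f \<in> borel_measurable (powerM N)"
  shows "(\<integral>\<^sup>+ y. indicator (PiE {..<N - m} (\<lambda>_. B)) y * (\<integral>\<^sup>+ x. f (join m N x y) * marginal m x \<partial>powerM m) \<partial>powerM (N - m))
    \<le> ennreal ((1 / \<epsilon>) ^ (N - m)) * (\<integral>\<^sup>+ z. f z * ennreal (P z) \<partial>powerM N)"
proof -
  let ?c = "ennreal ((1 / \<epsilon>) ^ (N - m))"
  have "AE z in powerM N. (\<forall>i\<in>{m..<N}. z i \<in> B) \<longrightarrow>
      ennreal (\<epsilon> ^ (N - m)) * marginal m (restrict z {..<m}) \<le> ennreal (P z)"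
    by (rule marginal_le_density) (use assms in auto)
  from AE_join_snd[OF assms(1) this]
  have bound: "AE y in powerM (N - m). AE x in powerM m. y \<in> PiE {..<N - m} (\<lambda>_. B) \<longrightarrow>
      marginal m x \<le> ?c * ennreal (P (join m N x y))"
  proof eventually_elim
    case (elim y)
    show ?case
      using elim AE_space
    proof eventually_elim
      case (elim x)
      show ?case
      proof
        assume y: "y \<in> PiE {..<N - m} (\<lambda>_. B)"
        have "join m N x y i \<in> B" if "i \<in> {m..<N}" for i
          using y that by (auto simp: join_def PiE_iff)
        with elim have "ennreal (\<epsilon> ^ (N - m)) * marginal m x \<le> ennreal (P (join m N x y))"
          by (simp add: restrict_join space_PiM PiE_def)
        then show "marginal m x \<le> ?c * ennreal (P (join m N x y))"
          using assms(2) by (rule ennreal_le_inverse_power_mult[rotated])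
      qed
    qed
  qed
  have "(\<integral>\<^sup>+ y. indicator (PiE {..<N - m} (\<lambda>_. B)) y * (\<integral>\<^sup>+ x. f (join m N x y) * marginal m x \<partial>powerM m) \<partial>powerM (N - m))
      \<le> (\<integral>\<^sup>+ y. \<integral>\<^sup>+ x. ?c * (f (join m N x y) * ennreal (P (join m N x y))) \<partial>powerM m \<partial>powerM (N - m))"
  proof (rule nn_integral_mono_AE[OF AE_mp[OF bound AE_I2]], rule impI)
    fix y assume y_bound: "AE x in powerM m. y \<in> PiE {..<N - m} (\<lambda>_. B) \<longrightarrow>
      marginal m x \<le> ?c * ennreal (P (join m N x y))"
    show "indicator (PiE {..<N - m} (\<lambda>_. B)) y * (\<integral>\<^sup>+ x. f (join m N x y) * marginal m x \<partial>powerM m)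
      \<le> (\<integral>\<^sup>+ x. ?c * (f (join m N x y) * ennreal (P (join m N x y))) \<partial>powerM m)"
    proof (cases "y \<in> PiE {..<N - m} (\<lambda>_. B)")
      case True
      from y_bound have "AE x in powerM m.
          f (join m N x y) * marginal m x \<le> ?c * (f (join m N x y) * ennreal (P (join m N x y)))"
      proof eventually_elim
        case (elim x)
        with True have "f (join m N x y) * marginal m x \<le> f (join m N x y) * (?c * ennreal (P (join m N x y)))"
          by (intro mult_left_mono) auto
        then show ?case by (simp add: mult_ac)
      qed
      with True show ?thesis by (simp add: nn_integral_mono_AE)
    qed simp
  qed
  also have "\<dots> = (\<integral>\<^sup>+ z. ?c * (f z * ennreal (P z)) \<partial>powerM N)"
    using f borel_measurable_ennreal_density by (intro nn_integral_join_snd[OF assms(1), symmetric]) measurable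
  also have "\<dots> = ?c * (\<integral>\<^sup>+ z. f z * ennreal (P z) \<partial>powerM N)"
    using f borel_measurable_ennreal_density by (intro nn_integral_cmult) measurable
  finally show ?thesis .
qed

lemma not_AE_slices_exceed:
  assumes "m \<le> N" "0 < \<epsilon>" "B \<subseteq> A" "\<And>x. x \<in> B \<Longrightarrow> \<epsilon> \<le> \<gamma> x" "B \<in> sets M"
    and B_pos: "0 < emeasure M B" and B_fin: "emeasure M B < \<infinity>"
    and f: "f \<in> borel_measurable (powerM N)"
    and finite: "(\<integral>\<^sup>+ z. f z * ennreal (P z) \<partial>powerM N) < \<infinity>"
  shows "\<not> (AE y in powerM (N - m). y \<in> PiE {..<N - m} (\<lambda>_. B) \<longrightarrow>
    ennreal ((1 / (\<epsilon> * measure M B)) ^ (N - m)) * (\<integral>\<^sup>+ z. f z * ennreal (P z) \<partial>powerM N)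
      < (\<integral>\<^sup>+ x. f (join m N x y) * marginal m x \<partial>powerM m))"
proof
  let ?B = "PiE {..<N - m} (\<lambda>_. B)"
  let ?K = "\<integral>\<^sup>+ z. f z * ennreal (P z) \<partial>powerM N"
  let ?I = "\<lambda>y. \<integral>\<^sup>+ x. f (join m N x y) * marginal m x \<partial>powerM m"
  define c where "c = measure M B"
  define lower where "lower y = ennreal ((1 / (\<epsilon> * c)) ^ (N - m)) * ?K * indicator ?B y" for y
  define upper where "upper y = indicator ?B y * ?I y" for y
  assume exceed: "AE y in powerM (N - m). y \<in> ?B \<longrightarrow> ennreal ((1 / (\<epsilon> * measure M B)) ^ (N - m)) * ?K < ?I y"
  have B: "emeasure M B = ennreal c" "0 < c"
    using B_pos B_fin by (auto simp: c_def emeasure_eq_ennreal_measure measure_nonneg ennreal_less_zero_iff)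
  have B_sets: "?B \<in> sets (powerM (N - m))"
    using assms(5) by (intro sets_PiM_I_finite) auto
  have B_measure: "emeasure (powerM (N - m)) ?B = ennreal c ^ (N - m)"
    using assms(5) by (subst product.emeasure_PiM) (auto simp: B)
  have "(\<integral>\<^sup>+ y. lower y \<partial>powerM (N - m)) = ennreal ((1 / (\<epsilon> * c)) ^ (N - m)) * ?K * emeasure (powerM (N - m)) ?B"
    unfolding lower_def by (rule nn_integral_cmult_indicator[OF B_sets])
  also have "\<dots> = ennreal ((1 / (\<epsilon> * c)) ^ (N - m) * c ^ (N - m)) * ?K"
    using B assms(2) by (simp add: B_measure ennreal_power ennreal_mult mult_ac)
  also have "(1 / (\<epsilon> * c)) ^ (N - m) * c ^ (N - m) = (1 / \<epsilon>) ^ (N - m)"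
    using B assms(2) by (simp add: power_mult_distrib[symmetric])
  finally have lower: "(\<integral>\<^sup>+ y. lower y \<partial>powerM (N - m)) = ennreal ((1 / \<epsilon>) ^ (N - m)) * ?K" .
  have "(\<integral>\<^sup>+ y. lower y \<partial>powerM (N - m)) < (\<integral>\<^sup>+ y. upper y \<partial>powerM (N - m))"
  proof (rule nn_integral_less)
    show "lower \<in> borel_measurable (powerM (N - m))"
      unfolding lower_def[abs_def] using B_sets by measurable
    show "upper \<in> borel_measurable (powerM (N - m))"
      unfolding upper_def[abs_def]
      using B_sets borel_measurable_nn_integral_join_fst[OF assms(1) f borel_measurable_marginal[OF assms(1)]]
      by measurable
    show "(\<integral>\<^sup>+ y. lower y \<partial>powerM (N - m)) \<noteq> \<infinity>"
      using finite by (simp add: lower ennreal_mult_eq_top_iff)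
    show "AE y in powerM (N - m). lower y \<le> upper y"
      using exceed by eventually_elim (simp add: lower_def upper_def c_def less_imp_le split: split_indicator)
    show "\<not> (AE y in powerM (N - m). upper y \<le> lower y)"
    proof
      assume "AE y in powerM (N - m). upper y \<le> lower y"
      with exceed have "AE y in powerM (N - m). y \<notin> ?B"
      proof eventually_elim
        case (elim y)
        show ?case
        proof
          assume "y \<in> ?B"
          with elim show False by (simp add: lower_def upper_def c_def)
        qed
      qed
      then have "emeasure (powerM (N - m)) ?B = 0"
        using AE_iff_null_sets[OF B_sets] by auto
      with B_measure B show False by simp
    qed
  qed
  also have "\<dots> \<le> ennreal ((1 / \<epsilon>) ^ (N - m)) * ?K"
    unfolding upper_def by (rule nn_integral_slices_le[OF assms(1-4) f])
  finally show False by (simp add: lower)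
qed

lemma slice_set_not_null:
  assumes "m \<le> N" "0 < \<epsilon>" "B \<subseteq> A" "\<And>x. x \<in> B \<Longrightarrow> \<epsilon> \<le> \<gamma> x" "B \<in> sets M"
    and "0 < emeasure M B" "emeasure M B < \<infinity>"
    and P': "AE z in powerM N. P' z = P z" "\<forall>z\<in>space (powerM N). 0 \<le> P' z"
    and U: "U \<in> borel_measurable (dk M N)"
    and finite: "(\<integral>\<^sup>+ z. ennreal (\<bar>U z\<bar> powr r * P' z) \<partial>dk M N) < \<infinity>"
  shows "\<not> (\<exists>S \<in> sets (dk M (N - m)). {y \<in> PiE {..<N - m} (\<lambda>_. B).
      (\<lambda>x. U (join m N x y)) \<in> borel_measurable (dk M m) \<and>
      (\<integral>\<^sup>+ x. ennreal (\<bar>U (join m N x y)\<bar> powr r) * rho M N P' m x \<partial>dk M m)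
        \<le> ennreal ((1 / (\<epsilon> * measure M B)) ^ (N - m)) * (\<integral>\<^sup>+ z. ennreal (\<bar>U z\<bar> powr r * P' z) \<partial>dk M N)}
      \<subseteq> S \<and> emeasure (dk M (N - m)) S = 0)" (is "\<not> (\<exists>S \<in> _. ?T \<subseteq> S \<and> _)")
proof
  let ?\<alpha> = "ennreal ((1 / (\<epsilon> * measure M B)) ^ (N - m))"
  assume "\<exists>S \<in> sets (dk M (N - m)). ?T \<subseteq> S \<and> emeasure (dk M (N - m)) S = 0"
  then obtain S where "S \<in> sets (dk M (N - m))" "emeasure (dk M (N - m)) S = 0" and TS: "?T \<subseteq> S"
    by blast
  then have S: "S \<in> null_sets (dk M (N - m))" by (intro null_setsI)
  obtain U' where U': "U' \<in> borel_measurable (powerM N)" "AE z in powerM N. U z = U' z"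
    using completion_ex_borel_measurable_real[of U "powerM N"] U unfolding dk_def by blast
  define f where "f z = ennreal (\<bar>U' z\<bar> powr r)" for z
  have f: "f \<in> borel_measurable (powerM N)" unfolding f_def[abs_def] using U'(1) by measurable
  have K: "(\<integral>\<^sup>+ z. ennreal (\<bar>U z\<bar> powr r * P' z) \<partial>dk M N) = (\<integral>\<^sup>+ z. f z * ennreal (P z) \<partial>powerM N)"
    unfolding dk_def nn_integral_completion using U'(2) P'(1) AE_space[of "powerM N"]
  proof (intro nn_integral_cong_AE, eventually_elim)
    case (elim z)
    then have "0 \<le> P z" using P'(2) by auto
    with elim show ?case by (simp add: f_def ennreal_mult)
  qed
  have "AE y in powerM (N - m). y \<notin> S"
    using AE_not_in[OF S] unfolding dk_def AE_completion_iff .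
  with AE_slice_completion[OF assms(1) U']
  have "AE y in powerM (N - m). y \<in> PiE {..<N - m} (\<lambda>_. B) \<longrightarrow>
      ?\<alpha> * (\<integral>\<^sup>+ z. f z * ennreal (P z) \<partial>powerM N) < (\<integral>\<^sup>+ x. f (join m N x y) * marginal m x \<partial>powerM m)"
  proof eventually_elim
    case (elim y)
    have slice: "(\<integral>\<^sup>+ x. ennreal (\<bar>U (join m N x y)\<bar> powr r) * rho M N P' m x \<partial>dk M m)
        = (\<integral>\<^sup>+ x. f (join m N x y) * marginal m x \<partial>powerM m)"
      unfolding dk_def nn_integral_completion using conjunct2[OF elim(1)] rho_eq_marginal[OF assms(1) P'(1)]
      by (intro nn_integral_cong_AE, eventually_elim) (simp add: f_def)
    show ?case
    proof
      assume "y \<in> PiE {..<N - m} (\<lambda>_. B)"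
      moreover have "y \<notin> ?T" using elim(2) TS by auto
      ultimately have "\<not> (\<integral>\<^sup>+ x. ennreal (\<bar>U (join m N x y)\<bar> powr r) * rho M N P' m x \<partial>dk M m)
          \<le> ?\<alpha> * (\<integral>\<^sup>+ z. ennreal (\<bar>U z\<bar> powr r * P' z) \<partial>dk M N)"
        using elim(1) by (simp add: dk_def)
      with slice show "?\<alpha> * (\<integral>\<^sup>+ z. f z * ennreal (P z) \<partial>powerM N) < (\<integral>\<^sup>+ x. f (join m N x y) * marginal m x \<partial>powerM m)"
        by (simp add: K not_le)
    qed
  qed
  with not_AE_slices_exceed[OF assms(1-7) f] finite show False by (simp add: K)
qed

end

theorem lemma5:
  fixes M :: "'a measure" and N :: nat and P :: "(nat \<Rightarrow> 'a) \<Rightarrow> real"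
    and A :: "'a set" and \<gamma> :: "'a \<Rightarrow> real" and \<epsilon> :: real
  assumes complete: "complete_measure M"
    and sfin: "sigma_finite_measure M"
    and nonzero: "emeasure M (space M) \<noteq> 0"
    and N2: "N \<ge> 2"
    and P_meas: "P \<in> borel_measurable (dk M N)"
    and P_nonneg: "\<forall>x\<in>space (dk M N). P x \<ge> 0"
    and P_sym: "\<forall>\<sigma>. \<sigma> permutes {..<N} \<longrightarrow> (\<forall>x\<in>space (dk M N). P (x \<circ> \<sigma>) = P x)"
    and P_int: "(\<integral>\<^sup>+ x. ennreal (P x) \<partial>dk M N) = 1"
    and A_meas: "A \<in> sets M"
    and A_pos: "emeasure M A > 0"
    and \<gamma>_meas: "\<gamma> \<in> borel_measurable (restrict_space M A)"
    and \<gamma>_pos: "\<forall>x\<in>A. \<gamma> x > 0"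
    and P_lower: "AE x in dk M N. x (N - 1) \<in> A \<longrightarrow>
        rho M N P (N - 1) (restrict x {..<N - 1}) * ennreal (\<gamma> (x (N - 1))) \<le> ennreal (P x)"
    and \<epsilon>_pos: "\<epsilon> > 0"
    and A\<epsilon>_pos: "emeasure M {x \<in> A. \<gamma> x > \<epsilon>} > 0"
  shows "emeasure M {x \<in> A. \<gamma> x > \<epsilon>} < \<infinity> \<and>
    (\<forall>(r::real) (U::(nat \<Rightarrow> 'a) \<Rightarrow> real) m.
       1 \<le> r \<longrightarrow>
       U \<in> borel_measurable (dk M N) \<longrightarrow>
       (\<integral>\<^sup>+ x. ennreal (\<bar>U x\<bar> powr r * P x) \<partial>dk M N) < \<infinity> \<longrightarrow>
       1 \<le> m \<longrightarrow> m \<le> N - 1 \<longrightarrow>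
       (let A\<epsilon> = {x \<in> A. \<gamma> x > \<epsilon>};
            \<alpha> = 1 / (\<epsilon> * measure M A\<epsilon>);
            T = {y \<in> PiE {..<N - m} (\<lambda>_. A\<epsilon>).
                   (\<lambda>x. U (join m N x y)) \<in> borel_measurable (dk M m) \<and>
                   (\<integral>\<^sup>+ x. ennreal (\<bar>U (join m N x y)\<bar> powr r) * rho M N P m x \<partial>dk M m)
                     \<le> ennreal (\<alpha> ^ (N - m)) * (\<integral>\<^sup>+ x. ennreal (\<bar>U x\<bar> powr r * P x) \<partial>dk M N)}
        in \<not> (\<exists>S \<in> sets (dk M (N - m)). T \<subseteq> S \<and> emeasure (dk M (N - m)) S = 0)))"
proof -
  interpret cartesian_power M using sfin by (simp add: cartesian_power_def)
  obtain P1 where P1: "P1 \<in> borel_measurable (powerM N)" "AE z in powerM N. P z = P1 z"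
    using completion_ex_borel_measurable_real[of P "powerM N"] P_meas unfolding dk_def by blast
  interpret density_marginals M N P1 by unfold_locales (rule P1(1))
  have "\<sigma> permutes {..<N} \<Longrightarrow> AE z in powerM N. P1 (z \<circ> \<sigma>) = P1 z" for \<sigma>
    using AE_eq_permute_invariant[OF _ _ P1(2)] P_sym by (simp add: dk_def)
  moreover have "AE z in powerM N. z (N - 1) \<in> A \<longrightarrow>
      marginal (N - 1) (restrict z {..<N - 1}) * ennreal (\<gamma> (z (N - 1))) \<le> ennreal (P1 z)"
    using marginal_lower_bound_of_AE_eq[OF P1(2)] P_lower unfolding dk_def AE_completion_iff .
  ultimately interpret symmetric_lower_bound M N P1 A \<gamma>
    using N2 by unfold_locales auto
  let ?A\<epsilon> = "{x \<in> A. \<gamma> x > \<epsilon>}"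
  have A\<epsilon>_sets: "?A\<epsilon> \<in> sets M"
    using superlevel_set_restrict_space[OF A_meas \<gamma>_meas] .
  have "(\<integral>\<^sup>+ z. ennreal (P1 z) \<partial>powerM N) = 1"
    unfolding P_int[symmetric] dk_def nn_integral_completion using P1(2) by (intro nn_integral_cong_AE) auto
  then have "ennreal \<epsilon> * emeasure M ?A\<epsilon> \<le> 1"
    using \<epsilon>_pos A\<epsilon>_sets by (intro emeasure_superlevel_le) auto
  then have A\<epsilon>_fin: "emeasure M ?A\<epsilon> < \<infinity>"
    using \<epsilon>_pos by (cases "emeasure M ?A\<epsilon> = \<infinity>") (simp_all add: less_top ennreal_mult_top top_unique)
  have P_nonneg': "\<forall>z\<in>space (powerM N). 0 \<le> P z"
    using P_nonneg by (simp add: dk_def)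
  show ?thesis
    unfolding Let_def
    by (intro conjI allI impI A\<epsilon>_fin slice_set_not_null[OF _ \<epsilon>_pos _ _ A\<epsilon>_sets A\<epsilon>_pos A\<epsilon>_fin P1(2) P_nonneg'])
      auto
qed

end
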